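(* Let $m\in\mathbb{N}$, let $\alpha,\beta,\mu\in\mathbb{C}$ with $\alpha,\frac{1+\alpha+\beta}{2}\notin\mathbb{Z}_0^-$, $\Re(\beta)>0$ and $\Re(\mu)>0$. Then \[ \int_0^\infty t^{\beta-1}e^{-\mu t}\,{}_2F_2\left[\begin{array}{r} -m,\ \alpha;\\ -2m,\ \tfrac{1+\alpha+\beta}{2};\end{array}\mu t\right]_m dt=\frac{\Gamma(\beta)}{\mu^{\beta}}\frac{\left(\frac{1+\alpha}{2}\right)_m\left(\frac{1+\beta}{2}\right)_m}{\left(\frac{1}{2}\right)_m\left(\frac{1+\alpha+\beta}{2}\right)_m}. \]
   Context: $\mathbb{N}=\{1,2,3,\dots\}$, $\mathbb{Z}_0^-=\{0,-1,-2,\dots\}$. For $a\in\mathbb{C}$ and $n\in\mathbb{N}_0$, $(a)_0=1$ and $(a)_n=a(a+1)\cdots(a+n-1)$. For $N\in\mathbb{N}_0$, the truncated series is ${}_2F_2\left[\begin{array}{r} a_1,a_2;\\ b_1,b_2;\end{array}z\right]_N=\sum_{n=0}^{N}\frac{(a_1)_n(a_2)_n}{(b_1)_n(b_2)_n}\frac{z^n}{n!}$ (first $N+1$ terms). The left side is the Mellin transform $\int_0^\infty t^{s-1}f(t)\,dt$ at $s=\beta$; $\mu^{\beta}$ denotes the principal power. *)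

theory Defs
  imports "HOL-Analysis.Analysis"
begin

definition hyp2F2_trunc ::
  "complex \<Rightarrow> complex \<Rightarrow> complex \<Rightarrow> complex \<Rightarrow> nat \<Rightarrow> complex \<Rightarrow> complex" where
  "hyp2F2_trunc a1 a2 b1 b2 N z =
     (\<Sum>n=0..N. (pochhammer a1 n * pochhammer a2 n) / (pochhammer b1 n * pochhammer b2 n)
                 * z ^ n / of_nat (fact n))"

end

theory Submission
  imports Defs "HOL-Complex_Analysis.Complex_Analysis"
begin

(* Expanding the truncated 2F2 and integrating term by term with Euler's integral
   \<integral>\<^sub>0\<^sup>\<infinity> t^(s-1) e^(-\<mu>t) dt = \<Gamma>(s)/\<mu>^s turns the left-hand side into \<Gamma>(\<beta>)/\<mu>^\<beta> times the
   terminating sum  \<Sum>\<^sub>n (-m)\<^sub>n (\<alpha>)\<^sub>n (\<beta>)\<^sub>n / ((-2m)\<^sub>n ((1+\<alpha>+\<beta>)/2)\<^sub>n n!),  which Watson's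
   3F2 theorem evaluates to the stated quotient of Pochhammer symbols.

   Watson's terminating sum is proved by the WZ method: if F(m,n) is its summand and r(m) the
   ratio of consecutive right-hand sides, then F(m+1,n) - r(m) F(m,n) = G(m,n+1) - G(m,n) for an
   explicit rational multiple G of F(m+1,n), and summing over n telescopes.

   Euler's integral for complex \<mu> follows from the case \<mu> > 0 (a change of variables in the
   Gamma integral) by analytic continuation: on the right half-plane the integral is holomorphic
   in \<mu>, being a locally uniform limit of integrals over compact intervals. *)

section \<open>Watson's terminating sum\<close>

definition watson_term :: "complex \<Rightarrow> complex \<Rightarrow> nat \<Rightarrow> nat \<Rightarrow> complex" where
  "watson_term a b m n =
     pochhammer (- of_nat m) n * pochhammer a n * pochhammer b n
     / (pochhammer (- 2 * of_nat m) n * pochhammer ((1 + a + b) / 2) n * fact n)"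

lemma watson_term_Suc_right:
  "watson_term a b m (Suc n) = watson_term a b m n
     * ((of_nat n - of_nat m) / (of_nat n - 2 * of_nat m)
        * ((a + of_nat n) * (b + of_nat n) / (((1 + a + b) / 2 + of_nat n) * (of_nat n + 1))))"
  unfolding watson_term_def pochhammer_Suc fact_Suc times_divide_times_eq
  by (rule arg_cong2[where f = "(/)"]) (simp_all add: algebra_simps)

lemma pochhammer_minus_of_nat_Suc:
  assumes "n \<le> k"
  shows "pochhammer (- of_nat (Suc k) :: 'a :: field_char_0) n
    = of_nat (Suc k) / (of_nat (Suc k) - of_nat n) * pochhammer (- of_nat k) n"
proof -
  have "(of_nat (Suc k) - of_nat n) * pochhammer (- of_nat (Suc k) :: 'a) n
      = of_nat (Suc k) * pochhammer (- of_nat k) n"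
    using pochhammer_absorb_comp[of "of_nat (Suc k) :: 'a" n] by simp
  moreover have "(of_nat (Suc k) :: 'a) \<noteq> of_nat n"
    using assms by (simp only: of_nat_eq_iff)
  ultimately show ?thesis by (simp add: field_simps)
qed

lemma watson_term_Suc_left:
  assumes "n \<le> m"
  shows "watson_term a b (Suc m) n =
    (2 * of_nat m + 2 - of_nat n) * (2 * of_nat m + 1 - of_nat n)
      / (2 * (of_nat m + 1 - of_nat n) * (2 * of_nat m + 1)) * watson_term a b m n"
proof -
  define P :: "nat \<Rightarrow> complex" where "P k = pochhammer (- of_nat k) n" for k
  define X where "X = pochhammer a n * pochhammer b n"
  define Y where "Y = pochhammer ((1 + a + b) / 2) n * fact n"
  have P_Suc: "P (Suc k) = of_nat (Suc k) / (of_nat (Suc k) - of_nat n) * P k" if "n \<le> k" for k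
    unfolding P_def using that by (rule pochhammer_minus_of_nat_Suc)
  have "watson_term a b (Suc m) n = P (Suc m) * X / (P (Suc (Suc (2 * m))) * Y)"
    unfolding watson_term_def P_def X_def Y_def by (simp add: mult.assoc)
  also have "\<dots> = (of_nat (Suc m) / (of_nat (Suc m) - of_nat n))
      / (of_nat (Suc (Suc (2 * m))) / (of_nat (Suc (Suc (2 * m))) - of_nat n)
         * (of_nat (Suc (2 * m)) / (of_nat (Suc (2 * m)) - of_nat n)))
      * (P m * X / (P (2 * m) * Y))" (is "_ = ?ratio * _")
    using assms by (simp add: P_Suc times_divide_times_eq mult.assoc)
  also have "P m * X / (P (2 * m) * Y) = watson_term a b m n"
    unfolding watson_term_def P_def X_def Y_def by (simp add: mult.assoc)
  also have "?ratio = (2 * of_nat m + 2 - of_nat n) * (2 * of_nat m + 1 - of_nat n)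
      / (2 * (of_nat m + 1 - of_nat n) * (2 * of_nat m + 1))"
  proof -
    have "of_nat (m + 1) \<noteq> (of_nat n :: complex)" "of_nat (2 * m + 1) \<noteq> (of_nat n :: complex)"
      "of_nat (2 * m + 2) \<noteq> (of_nat n :: complex)" "of_nat (2 * m + 2) \<noteq> (of_nat (2 * n) :: complex)"
      "of_nat (2 * m + 1) \<noteq> (0 :: complex)" "of_nat (2 * m + 2) \<noteq> (0 :: complex)" "of_nat (m + 1) \<noteq> (0 :: complex)"
      using assms by (simp_all only: of_nat_eq_iff of_nat_eq_0_iff)
    then show ?thesis by (simp add: divide_simps) (simp add: algebra_simps)
  qed
  finally show ?thesis .
qed

(* The recurrence of watson_term_recurrence divided by watson_term a b m n: \<rho> and \<tau> are the
   ratios in watson_term_Suc_left and watson_term_Suc_right, r is the ratio of consecutive values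
   of the right-hand side of watson_sum, and R is the rational factor in watson_certificate. *)
lemma watson_wz_identity:
  fixes a b c m n :: complex
  defines "\<rho> \<equiv> (2*m+2-n) * (2*m+1-n) / (2 * (m+1-n) * (2*m+1))"
    and "\<tau> \<equiv> (n-m-1) / (n-2*m-2) * ((a+n) * (b+n) / ((c+n) * (n+1)))"
    and "r \<equiv> ((1+a)/2 + m) * ((1+b)/2 + m) / ((1/2 + m) * (c + m))"
    and "R \<equiv> \<lambda>x. x * (x+c-1) / ((m+c) * (2*m+2-x))"
  assumes c: "2 * c = 1 + a + b"
    and nz: "m + 1 - n \<noteq> 0" "2 * m + 1 \<noteq> 0" "2 * m + 1 - n \<noteq> 0" "2 * m + 2 - n \<noteq> 0"
      "n + 1 \<noteq> 0" "c + n \<noteq> 0" "m + c \<noteq> 0"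
  shows "\<rho> - r = \<rho> * R n - \<rho> * \<tau> * R (n + 1)"
proof -
  \<comment> \<open>Naming the linear factors stops divide_simps from multiplying them out, which would
    leave side conditions it cannot discharge.\<close>
  define u v w q where "u = m+1-n" and "v = 2*m+1-n" and "w = 2*m+2-n" and "q = 2*m+1"
  have factors: "n-m-1 = -u" "n-2*m-2 = -w" "1/2 + m = q/2" "c + m = m + c"
      "(1+a)/2 + m = (1+a+2*m)/2" "(1+b)/2 + m = (1+b+2*m)/2" "2*m+2-(n+1) = v" "n+1+c-1 = c+n"
    by (simp_all add: u_def v_def w_def q_def field_simps)
  have b: "b = 2*c - 1 - a" using c by (simp add: algebra_simps)
  have "u \<noteq> 0" "v \<noteq> 0" "w \<noteq> 0" "q \<noteq> 0" using nz by (simp_all add: u_def v_def w_def q_def)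
  then show ?thesis
    using nz(5-7) unfolding \<rho>_def \<tau>_def r_def R_def
    unfolding factors u_def[symmetric] v_def[symmetric] w_def[symmetric] q_def[symmetric]
    by (simp add: divide_simps, unfold u_def v_def w_def q_def b, simp add: algebra_simps)
qed

definition watson_certificate :: "complex \<Rightarrow> complex \<Rightarrow> nat \<Rightarrow> nat \<Rightarrow> complex" where
  "watson_certificate a b m n = - watson_term a b (Suc m) n
     * (of_nat n * (of_nat n + (1 + a + b) / 2 - 1)
        / ((of_nat m + (1 + a + b) / 2) * (2 * of_nat m + 2 - of_nat n)))"

lemma watson_term_recurrence:
  assumes c: "(1 + a + b) / 2 \<notin> \<int>\<^sub>\<le>\<^sub>0" and "n \<le> m"
  shows "watson_term a b (Suc m) n
      - ((1+a)/2 + of_nat m) * ((1+b)/2 + of_nat m) / ((1/2 + of_nat m) * ((1+a+b)/2 + of_nat m))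
        * watson_term a b m n
    = watson_certificate a b m (Suc n) - watson_certificate a b m n"
proof -
  define c where "c = (1 + a + b) / 2"
  define \<rho> :: complex where "\<rho> = (2 * of_nat m + 2 - of_nat n) * (2 * of_nat m + 1 - of_nat n)
      / (2 * (of_nat m + 1 - of_nat n) * (2 * of_nat m + 1))"
  define \<tau> where "\<tau> = (of_nat n - of_nat m - 1) / (of_nat n - 2 * of_nat m - 2)
      * ((a + of_nat n) * (b + of_nat n) / ((c + of_nat n) * (of_nat n + 1)))"
  define r where "r = ((1+a)/2 + of_nat m) * ((1+b)/2 + of_nat m) / ((1/2 + of_nat m) * (c + of_nat m))"
  define R where "R = (\<lambda>x. x * (x + c - 1) / ((of_nat m + c) * (2 * of_nat m + 2 - x)))"
  have F1: "watson_term a b (Suc m) n = \<rho> * watson_term a b m n"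
    unfolding \<rho>_def using \<open>n \<le> m\<close> by (rule watson_term_Suc_left)
  have F2: "watson_term a b (Suc m) (Suc n) = \<rho> * \<tau> * watson_term a b m n"
    unfolding watson_term_Suc_right F1 \<tau>_def c_def by (simp add: algebra_simps)
  have cert: "watson_certificate a b m k = - watson_term a b (Suc m) k * R (of_nat k)" for k
    unfolding watson_certificate_def R_def c_def ..
  have "of_nat (m + 1) \<noteq> (of_nat n :: complex)" "of_nat (2 * m + 1) \<noteq> (of_nat n :: complex)"
    "of_nat (2 * m + 2) \<noteq> (of_nat n :: complex)" "of_nat (2 * m + 1) \<noteq> (0 :: complex)"
    "of_nat (n + 1) \<noteq> (0 :: complex)"
    using \<open>n \<le> m\<close> by (simp_all only: of_nat_eq_iff of_nat_eq_0_iff)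
  moreover have "c + of_nat k \<noteq> 0" for k
    using c plus_of_nat_eq_0_imp unfolding c_def by blast
  ultimately have "\<rho> - r = \<rho> * R (of_nat n) - \<rho> * \<tau> * R (of_nat n + 1)"
    unfolding \<rho>_def \<tau>_def r_def R_def
    by (intro watson_wz_identity) (simp_all add: c_def algebra_simps)
  moreover have "(of_nat (Suc n) :: complex) = of_nat n + 1" by simp
  ultimately show ?thesis
    unfolding cert F1 F2 c_def[symmetric] r_def[symmetric] by algebra
qed

lemma watson_sum:
  assumes c: "(1 + a + b) / 2 \<notin> \<int>\<^sub>\<le>\<^sub>0"
  shows "(\<Sum>n=0..m. watson_term a b m n)
    = pochhammer ((1 + a) / 2) m * pochhammer ((1 + b) / 2) m
      / (pochhammer (1 / 2) m * pochhammer ((1 + a + b) / 2) m)"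
proof (induction m)
  case 0
  show ?case by (simp add: watson_term_def)
next
  case (Suc m)
  define r where "r = ((1+a)/2 + of_nat m) * ((1+b)/2 + of_nat m) / ((1/2 + of_nat m) * ((1+a+b)/2 + of_nat m))"
  define G where "G = watson_certificate a b m"
  have "G (Suc m) = - watson_term a b (Suc m) (Suc m)"
  proof -
    have "of_nat m + (1 + a + b) / 2 \<noteq> 0"
      using c plus_of_nat_eq_0_imp by (metis add.commute)
    moreover have "of_nat m + 1 \<noteq> (0 :: complex)"
      by (metis of_nat_Suc of_nat_eq_0_iff nat.distinct(1) add.commute)
    ultimately have "of_nat (Suc m) * (of_nat (Suc m) + (1 + a + b) / 2 - 1)
        / ((of_nat m + (1 + a + b) / 2) * (2 * of_nat m + 2 - of_nat (Suc m))) = (1 :: complex)"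
      by (simp add: divide_simps) (simp add: algebra_simps)
    then show ?thesis unfolding G_def watson_certificate_def by simp
  qed
  moreover have "G 0 = 0" by (simp add: G_def watson_certificate_def)
  moreover have "(\<Sum>n=0..m. watson_term a b (Suc m) n) = (\<Sum>n=0..m. r * watson_term a b m n + (G (Suc n) - G n))"
    using watson_term_recurrence[OF c] unfolding r_def G_def
    by (intro sum.cong) (auto simp: algebra_simps)
  ultimately have "(\<Sum>n=0..Suc m. watson_term a b (Suc m) n) = r * (\<Sum>n=0..m. watson_term a b m n)"
    by (simp add: sum.distrib sum_distrib_left sum_Suc_diff)
  also have "\<dots> = pochhammer ((1 + a) / 2) (Suc m) * pochhammer ((1 + b) / 2) (Suc m)
      / (pochhammer (1 / 2) (Suc m) * pochhammer ((1 + a + b) / 2) (Suc m))"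
    unfolding Suc.IH r_def pochhammer_Suc times_divide_times_eq
    by (rule arg_cong2[where f = "(/)"]) (simp_all only: mult_ac)
  finally show ?case .
qed


section \<open>Euler's integral with a complex scale parameter\<close>

definition euler_integrand :: "complex \<Rightarrow> complex \<Rightarrow> real \<Rightarrow> complex" where
  "euler_integrand s \<mu> t = of_real t powr (s - 1) * exp (- \<mu> * of_real t)"

lemma norm_euler_integrand:
  "t > 0 \<Longrightarrow> norm (euler_integrand s \<mu> t) = t powr (Re s - 1) * exp (- Re \<mu> * t)"
  unfolding euler_integrand_def by (simp add: norm_mult norm_powr_real_powr)

lemma continuous_on_euler_integrand: "continuous_on {0<..} (euler_integrand s \<mu>)"
  unfolding euler_integrand_def by (auto intro!: continuous_intros)

lemma euler_integrand_absolutely_integrable: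
  assumes "Re s > 0" "Re \<mu> > 0"
  shows "euler_integrand s \<mu> absolutely_integrable_on {0<..}"
proof (rule measurable_bounded_by_integrable_imp_absolutely_integrable)
  show "euler_integrand s \<mu> \<in> borel_measurable (lebesgue_on {0<..})"
    by (intro continuous_imp_measurable_on_sets_lebesgue continuous_on_euler_integrand) auto
  show "(\<lambda>t. norm (complex_of_real t powr (s - 1) / of_real (exp (Re \<mu> * t)))) integrable_on {0<..}"
    using absolutely_integrable_Gamma_integral[OF assms] by (simp add: absolutely_integrable_on_def)
  show "norm (euler_integrand s \<mu> t) \<le> norm (complex_of_real t powr (s - 1) / of_real (exp (Re \<mu> * t)))"
    if "t \<in> {0<..}" for t
    using that by (simp add: norm_euler_integrand norm_divide norm_powr_real_powr exp_minus field_simps)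
qed auto

lemma euler_integrand_integrable:
  "Re s > 0 \<Longrightarrow> Re \<mu> > 0 \<Longrightarrow> euler_integrand s \<mu> integrable_on {0<..}"
  and euler_integrand_norm_integrable:
  "Re s > 0 \<Longrightarrow> Re \<mu> > 0 \<Longrightarrow> (\<lambda>t. norm (euler_integrand s \<mu> t)) integrable_on {0<..}"
  using euler_integrand_absolutely_integrable absolutely_integrable_on_def by blast+

lemma has_integral_euler_integrand_of_real:
  assumes s: "Re s > 0" and a: "a > 0"
  shows "(euler_integrand s (of_real a) has_integral (Gamma s / of_real a powr s)) {0<..}"
proof -
  define f where "f u = complex_of_real u powr (s - 1) / of_real (exp u)" for u
  have "y \<in> (\<lambda>x. a * x) ` {0<..}" if "y > 0" for y
    using that a by (intro image_eqI[of _ _ "y / a"]) auto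
  then have "(\<lambda>x. a * x) ` {0<..} = {(0::real)<..}"
    using a by (auto simp: zero_less_mult_iff)
  then have "f absolutely_integrable_on (\<lambda>x. a * x) ` {0<..} \<and> integral ((\<lambda>x. a * x) ` {0<..}) f = Gamma s"
    unfolding f_def using absolutely_integrable_Gamma_integral'[OF s] Gamma_integral_complex'[OF s]
    by (auto simp: integral_unique)
  then have "(\<lambda>x. \<bar>a\<bar> *\<^sub>R f (a * x)) absolutely_integrable_on {0<..}
      \<and> integral {0<..} (\<lambda>x. \<bar>a\<bar> *\<^sub>R f (a * x)) = Gamma s"
    using a by (subst has_absolute_integral_change_of_variables_real[where h = "\<lambda>_. a"])
      (auto intro!: derivative_eq_intros inj_onI)
  then have "((\<lambda>x. \<bar>a\<bar> *\<^sub>R f (a * x)) has_integral Gamma s) {0<..}"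
    using has_integral_integral absolutely_integrable_on_def by metis
  moreover have "\<bar>a\<bar> *\<^sub>R f (a * x) = of_real a powr s * euler_integrand s (of_real a) x" if "x \<in> {0<..}" for x
  proof -
    have "of_real (a * x) powr (s - 1) = of_real a powr (s - 1) * (of_real x powr (s - 1) :: complex)"
      using a that by (simp add: powr_times_real)
    moreover have "of_real a * of_real a powr (s - 1) = (of_real a powr s :: complex)"
      using a by (simp add: powr_diff)
    moreover have "exp (- (complex_of_real a * of_real x)) = inverse (of_real (exp (a * x)))"
      by (simp add: exp_minus flip: exp_of_real)
    ultimately show ?thesis
      using a that by (simp add: f_def euler_integrand_def scaleR_conv_of_real field_simps)
  qed
  ultimately have "((\<lambda>x. of_real a powr s * euler_integrand s (of_real a) x) has_integral Gamma s) {0<..}"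
    by (rule has_integral_cong[THEN iffD1, rotated])
  then have "((\<lambda>x. inverse (of_real a powr s) * (of_real a powr s * euler_integrand s (of_real a) x))
      has_integral inverse (of_real a powr s) * Gamma s) {0<..}"
    by (rule has_integral_mult_right)
  moreover have "(of_real a powr s :: complex) \<noteq> 0" using a by simp
  ultimately show ?thesis by (simp add: field_simps)
qed

lemma holomorphic_on_integral_euler_integrand_interval:
  assumes "0 < lo"
  shows "(\<lambda>\<mu>. integral {lo..hi} (euler_integrand s \<mu>)) holomorphic_on {\<mu>. Re \<mu> > 0}"
proof -
  have "(\<lambda>\<mu>. integral (cbox lo hi) (euler_integrand s \<mu>)) holomorphic_on {\<mu>. Re \<mu> > 0}"
  proof (rule leibniz_rule_holomorphic[where fx = "\<lambda>\<mu> t. - of_real t * euler_integrand s \<mu> t"])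
    show "((\<lambda>\<mu>. euler_integrand s \<mu> t) has_field_derivative - of_real t * euler_integrand s \<mu> t)
        (at \<mu> within {\<mu>. Re \<mu> > 0})" for \<mu> t
      unfolding euler_integrand_def by (auto intro!: derivative_eq_intros simp: algebra_simps)
    show "euler_integrand s \<mu> integrable_on cbox lo hi" for \<mu>
      using assms by (intro integrable_continuous continuous_on_subset[OF continuous_on_euler_integrand]) auto
    show "continuous_on ({\<mu>. Re \<mu> > 0} \<times> cbox lo hi) (\<lambda>(\<mu>, t). - of_real t * euler_integrand s \<mu> t)"
      using assms unfolding euler_integrand_def split_def by (auto intro!: continuous_intros)
  qed (rule convex_halfspace_Re_gt)
  then show ?thesis by simp
qed

lemma norm_integral_euler_integrand_tail_le:
  assumes s: "Re s > 0" and a: "a > 0" "a \<le> Re \<mu>" and lo: "0 < lo"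
  shows "norm (integral {0<..} (euler_integrand s \<mu>) - integral {lo..hi} (euler_integrand s \<mu>))
     \<le> integral {0<..} (\<lambda>t. norm (euler_integrand s (of_real a) t))
        - integral {lo..hi} (\<lambda>t. norm (euler_integrand s (of_real a) t))"
proof -
  define f where "f = euler_integrand s \<mu>"
  define g where "g t = norm (euler_integrand s (of_real a) t)" for t
  have "continuous_on {lo..hi} f" "continuous_on {lo..hi} g"
    unfolding f_def g_def using lo
    by (auto intro!: continuous_on_norm continuous_on_subset[OF continuous_on_euler_integrand])
  then have interval: "f integrable_on {lo..hi}" "g integrable_on {lo..hi}"
    by (auto intro: integrable_continuous_interval)
  have whole: "f integrable_on {0<..}" "g integrable_on {0<..}"
    unfolding f_def g_def using s a by (auto intro: euler_integrand_integrable euler_integrand_norm_integrable)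
  have "{lo..hi} - {0<..} = {}" using lo by auto
  then have "negligible ({lo..hi} - {0<..})" by simp
  note setdiff = integral_setdiff[OF whole(1) interval(1) this] integral_setdiff[OF whole(2) interval(2) this]
    integrable_setdiff[OF whole(1)[THEN integrable_integral] interval(1)[THEN integrable_integral] this]
    integrable_setdiff[OF whole(2)[THEN integrable_integral] interval(2)[THEN integrable_integral] this]
  have "norm (integral ({0<..} - {lo..hi}) f) \<le> integral ({0<..} - {lo..hi}) g"
    using setdiff(3,4) a by (intro integral_norm_bound_integral) (auto simp: f_def g_def norm_euler_integrand mult_left_mono)
  then show ?thesis unfolding f_def[symmetric] g_def[symmetric] setdiff(1,2) .
qed

lemma tendsto_integral_exhausting_intervals:
  fixes h :: "real \<Rightarrow> real"
  assumes h: "h integrable_on {0<..}" and "continuous_on {0<..} h" and "\<And>t. t > 0 \<Longrightarrow> h t \<ge> 0"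
  shows "(\<lambda>k. integral {1 / real (Suc k)..real (Suc k)} h) \<longlonglongrightarrow> integral {0<..} h"
proof -
  define I where "I k = {1 / real (Suc k)..real (Suc k)}" for k
  have sub: "I k \<subseteq> {0<..}" for k
    by (auto simp: I_def intro: less_le_trans[of 0 "1 / real (Suc k)"])
  have "h integrable_on I k" for k
    unfolding I_def by (rule integrable_continuous_interval, rule continuous_on_subset[OF assms(2)])
      (auto intro: less_le_trans[of 0 "1 / real (Suc k)"])
  then have restrict: "integral (I k) h = integral {0<..} (\<lambda>t. if t \<in> I k then h t else 0)"
      "(\<lambda>t. if t \<in> I k then h t else 0) integrable_on {0<..}" for k
    using integral_restrict_Int[of "{0<..}" "I k" h] integrable_restrict_Int[of "I k" h "{0<..}"]
      Int_absorb1[OF sub[of k]] Int_absorb2[OF sub[of k]] by simp_all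
  have "(\<lambda>k. integral {0<..} (\<lambda>t. if t \<in> I k then h t else 0)) \<longlonglongrightarrow> integral {0<..} h"
  proof (rule dominated_convergence(2)[OF restrict(2) h])
    show "norm (if t \<in> I k then h t else 0) \<le> h t" if "t \<in> {0<..}" for k t
      using assms(3)[of t] that by auto
    fix t :: real
    assume "t \<in> {0<..}"
    then have t: "t > 0" by simp
    obtain N :: nat where N: "max t (1 / t) \<le> real N" using real_arch_simple by blast
    have "\<forall>\<^sub>F k in sequentially. (if t \<in> I k then h t else 0) = h t"
    proof (rule eventually_sequentiallyI[of N])
      fix k
      assume "N \<le> k"
      then have k: "max t (1 / t) \<le> real (Suc k)" using N by linarith
      then have "1 / real (Suc k) \<le> t" using t by (simp add: field_simps)
      with k show "(if t \<in> I k then h t else 0) = h t" by (simp add: I_def)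
    qed
    then show "(\<lambda>k. if t \<in> I k then h t else 0) \<longlonglongrightarrow> h t" by (rule tendsto_eventually)
  qed
  then show ?thesis using restrict(1) by (simp add: I_def)
qed

lemma uniform_limit_integral_euler_integrand:
  assumes s: "Re s > 0" and a: "a > 0"
  shows "uniform_limit {\<mu>. a \<le> Re \<mu>}
      (\<lambda>k \<mu>. integral {1 / real (Suc k)..real (Suc k)} (euler_integrand s \<mu>))
      (\<lambda>\<mu>. integral {0<..} (euler_integrand s \<mu>)) sequentially"
proof (rule uniform_limitI)
  define g where "g = (\<lambda>t. norm (euler_integrand s (of_real a) t))"
  have "(\<lambda>k. integral {1 / real (Suc k)..real (Suc k)} g) \<longlonglongrightarrow> integral {0<..} g"
    unfolding g_def using s a
    by (intro tendsto_integral_exhausting_intervals euler_integrand_norm_integrable)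
       (auto intro!: continuous_on_norm continuous_on_euler_integrand)
  from tendsto_diff[OF tendsto_const this, of "integral {0<..} g"]
  have "(\<lambda>k. integral {0<..} g - integral {1 / real (Suc k)..real (Suc k)} g) \<longlonglongrightarrow> 0"
    by simp
  moreover fix e :: real
  assume "e > 0"
  ultimately have "\<forall>\<^sub>F k in sequentially. integral {0<..} g - integral {1 / real (Suc k)..real (Suc k)} g < e"
    by (rule order_tendstoD(2))
  then show "\<forall>\<^sub>F k in sequentially. \<forall>\<mu>\<in>{\<mu>. a \<le> Re \<mu>}.
      dist (integral {1 / real (Suc k)..real (Suc k)} (euler_integrand s \<mu>)) (integral {0<..} (euler_integrand s \<mu>)) < e"
  proof (rule eventually_mono, safe)
    fix k \<mu>
    assume "integral {0<..} g - integral {1 / real (Suc k)..real (Suc k)} g < e" and "a \<le> Re \<mu>"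
    with norm_integral_euler_integrand_tail_le[OF s a this(2), of "1 / real (Suc k)" "real (Suc k)"]
    show "dist (integral {1 / real (Suc k)..real (Suc k)} (euler_integrand s \<mu>)) (integral {0<..} (euler_integrand s \<mu>)) < e"
      by (simp add: g_def dist_norm norm_minus_commute)
  qed
qed

lemma holomorphic_on_integral_euler_integrand:
  assumes s: "Re s > 0"
  shows "(\<lambda>\<mu>. integral {0<..} (euler_integrand s \<mu>)) holomorphic_on {\<mu>. Re \<mu> > 0}"
proof (rule holomorphic_uniform_sequence
    [where f = "\<lambda>k \<mu>. integral {1 / real (Suc k)..real (Suc k)} (euler_integrand s \<mu>)"])
  show "(\<lambda>\<mu>. integral {1 / real (Suc k)..real (Suc k)} (euler_integrand s \<mu>)) holomorphic_on {\<mu>. Re \<mu> > 0}" for k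
    by (rule holomorphic_on_integral_euler_integrand_interval) simp
  fix z :: complex
  assume "z \<in> {\<mu>. Re \<mu> > 0}"
  define a where "a = Re z / 2"
  have a: "a > 0" using \<open>z \<in> _\<close> by (simp add: a_def)
  have "a \<le> Re \<mu>" if "\<mu> \<in> cball z a" for \<mu>
    using that abs_Re_le_cmod[of "z - \<mu>"] by (auto simp: a_def dist_norm abs_le_iff)
  then have "cball z a \<subseteq> {\<mu>. a \<le> Re \<mu>}" by auto
  with a show "\<exists>d>0. cball z d \<subseteq> {\<mu>. Re \<mu> > 0} \<and>
      uniform_limit (cball z d) (\<lambda>k \<mu>. integral {1 / real (Suc k)..real (Suc k)} (euler_integrand s \<mu>))
        (\<lambda>\<mu>. integral {0<..} (euler_integrand s \<mu>)) sequentially"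
    by (intro exI[of _ a] conjI uniform_limit_on_subset[OF uniform_limit_integral_euler_integrand[OF s a]])
      auto
qed (rule open_halfspace_Re_gt)

lemma has_integral_euler_integrand:
  assumes s: "Re s > 0" and \<mu>: "Re \<mu> > 0"
  shows "(euler_integrand s \<mu> has_integral (Gamma s / \<mu> powr s)) {0<..}"
proof -
  define H where "H = {\<mu>::complex. Re \<mu> > 0}"
  define U where "U = complex_of_real ` {0<..}"
  have "integral {0<..} (euler_integrand s z) - Gamma s / z powr s = 0" if "z \<in> H" for z
  proof (rule analytic_continuation[where f = "\<lambda>z. integral {0<..} (euler_integrand s z) - Gamma s / z powr s"
        and S = H and U = U and \<xi> = 1])
    show "(\<lambda>z. integral {0<..} (euler_integrand s z) - Gamma s / z powr s) holomorphic_on H"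
      unfolding H_def
      by (intro holomorphic_intros holomorphic_on_integral_euler_integrand[OF s])
         (auto simp: complex_nonpos_Reals_iff)
    show "open H" "connected H"
      unfolding H_def by (auto intro: open_halfspace_Re_gt convex_connected convex_halfspace_Re_gt)
    show "U \<subseteq> H" "1 \<in> H" "z \<in> H" using that unfolding U_def H_def by auto
    show "1 islimpt U"
      unfolding islimpt_approachable
    proof safe
      fix e :: real
      assume "e > 0"
      then have "complex_of_real (1 + e / 2) \<in> U" unfolding U_def by (intro imageI) simp
      moreover have "complex_of_real (1 + e / 2) \<noteq> 1 \<and> dist (complex_of_real (1 + e / 2)) 1 < e"
        using \<open>e > 0\<close> by (simp add: dist_norm)
      ultimately show "\<exists>x'\<in>U. x' \<noteq> 1 \<and> dist x' 1 < e" by blast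
    qed
    show "integral {0<..} (euler_integrand s w) - Gamma s / w powr s = 0" if "w \<in> U" for w
      using that integral_unique[OF has_integral_euler_integrand_of_real[OF s]] by (auto simp: U_def)
  qed
  then have "integral {0<..} (euler_integrand s \<mu>) = Gamma s / \<mu> powr s" using \<mu> by (simp add: H_def)
  with euler_integrand_integrable[OF s \<mu>] show ?thesis by (metis has_integral_integral)
qed

lemma has_integral_euler_integrand_times_polynomial:
  assumes s: "Re s > 0" and \<mu>: "Re \<mu> > 0"
  shows "((\<lambda>t. euler_integrand s \<mu> t * (\<Sum>n=0..N. c n * (\<mu> * of_real t) ^ n))
      has_integral Gamma s / \<mu> powr s * (\<Sum>n=0..N. c n * pochhammer s n)) {0<..}"
proof -
  have "\<mu> \<noteq> 0" using \<mu> by auto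
  have "s \<notin> \<int>\<^sub>\<le>\<^sub>0" using s by (auto elim!: nonpos_Ints_cases)
  have "((\<lambda>t. c n * \<mu> ^ n * euler_integrand (s + of_nat n) \<mu> t)
      has_integral c n * \<mu> ^ n * (Gamma (s + of_nat n) / \<mu> powr (s + of_nat n))) {0<..}" for n
    using s \<mu> by (intro has_integral_mult_right has_integral_euler_integrand) auto
  moreover have "c n * \<mu> ^ n * (Gamma (s + of_nat n) / \<mu> powr (s + of_nat n))
      = Gamma s / \<mu> powr s * (c n * pochhammer s n)" for n
    using \<open>\<mu> \<noteq> 0\<close> \<open>s \<notin> \<int>\<^sub>\<le>\<^sub>0\<close>
    by (simp add: pochhammer_Gamma powr_add powr_nat' Gamma_eq_zero_iff field_simps)
  ultimately have "((\<lambda>t. \<Sum>n=0..N. c n * \<mu> ^ n * euler_integrand (s + of_nat n) \<mu> t)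
      has_integral Gamma s / \<mu> powr s * (\<Sum>n=0..N. c n * pochhammer s n)) {0<..}"
    unfolding sum_distrib_left by (intro has_integral_sum) auto
  moreover have "euler_integrand s \<mu> t * (\<Sum>n=0..N. c n * (\<mu> * of_real t) ^ n)
      = (\<Sum>n=0..N. c n * \<mu> ^ n * euler_integrand (s + of_nat n) \<mu> t)" if "t \<in> {0<..}" for t
  proof -
    have "euler_integrand (s + of_nat n) \<mu> t = euler_integrand s \<mu> t * of_real t ^ n" for n
    proof -
      have "of_real t powr (s + of_nat n - 1) = of_real t powr ((s - 1) + of_nat n)"
        by (simp add: algebra_simps)
      then show ?thesis
        using that by (simp add: euler_integrand_def powr_add powr_nat' mult_ac)
    qed
    then show ?thesis by (simp add: sum_distrib_left power_mult_distrib mult_ac)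
  qed
  ultimately show ?thesis by (rule has_integral_cong[THEN iffD2, rotated])
qed

theorem mainTheorem16:
  fixes m :: nat and \<alpha> \<beta> \<mu> :: complex
  assumes "m \<ge> 1"
    and "\<alpha> \<notin> \<int>\<^sub>\<le>\<^sub>0"
    and "(1 + \<alpha> + \<beta>) / 2 \<notin> \<int>\<^sub>\<le>\<^sub>0"
    and "Re \<beta> > 0" and "Re \<mu> > 0"
  shows "((\<lambda>t::real. of_real t powr (\<beta> - 1) * exp (- \<mu> * of_real t)
            * hyp2F2_trunc (- of_nat m) \<alpha> (- 2 * of_nat m) ((1 + \<alpha> + \<beta>) / 2) m (\<mu> * of_real t))
          has_integral
          (Gamma \<beta> / \<mu> powr \<beta>
            * (pochhammer ((1 + \<alpha>) / 2) m * pochhammer ((1 + \<beta>) / 2) m)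
            / (pochhammer (1 / 2) m * pochhammer ((1 + \<alpha> + \<beta>) / 2) m))) {0<..}"
proof -
  define c where "c n = pochhammer (- of_nat m) n * pochhammer \<alpha> n
      / (pochhammer (- 2 * of_nat m) n * pochhammer ((1 + \<alpha> + \<beta>) / 2) n) / fact n" for n
  have "hyp2F2_trunc (- of_nat m) \<alpha> (- 2 * of_nat m) ((1 + \<alpha> + \<beta>) / 2) m z = (\<Sum>n=0..m. c n * z ^ n)" for z
    unfolding hyp2F2_trunc_def c_def by (simp add: mult_ac)
  moreover have "(\<Sum>n=0..m. c n * pochhammer \<beta> n) = (\<Sum>n=0..m. watson_term \<alpha> \<beta> m n)"
    unfolding c_def watson_term_def by (simp add: mult_ac)
  ultimately show ?thesis
    using has_integral_euler_integrand_times_polynomial[OF assms(4,5), where N = m and c = c] watson_sum[OF assms(3)]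
    unfolding euler_integrand_def times_divide_eq_right by simp
qed

end
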